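(* Suppose the Assumption below holds. Then there exists a constant $\gamma_h\ge0$ such that $\sup_{\mathbf x\in\Omega}\|\mathcal H(\mathbf x)\|\le\gamma_h$.
   Context: Let $f,c_1,\dots,c_m:\mathbb R^n\to\mathbb R$ be twice continuously differentiable and $\Omega=\{\mathbf x\in\mathbb R^n: c_i(\mathbf x)=0,\ i=1,\dots,m\}$. Write $\nabla\mathbf c(\mathbf x)=[\nabla c_1(\mathbf x),\dots,\nabla c_m(\mathbf x)]$; $\mathcal P_{\mathbf x}$ is the orthogonal projection onto $\{\mathbf v:\nabla\mathbf c(\mathbf x)^\top\mathbf v=\mathbf 0\}$. Lagrangian $\mathcal L(\mathbf x,\boldsymbol\lambda)=f(\mathbf x)-\sum_i\lambda_ic_i(\mathbf x)$; $\boldsymbol\lambda^\star(\mathbf x)\in\arg\min_{\boldsymbol\lambda}\|\nabla_{\mathbf x}\mathcal L(\mathbf x,\boldsymbol\lambda)\|$; $\mathcal H(\mathbf x)=\mathcal P_{\mathbf x}^\top\nabla^2_{\mathbf x\mathbf x}\mathcal L(\mathbf x,\boldsymbol\lambda^\star(\mathbf x))\mathcal P_{\mathbf x}$. Matrix norms are spectral. Assumption: (a) $\nabla f,\nabla^2 f,\nabla c_i,\nabla^2 c_i$ are Lipschitz over $\Omega$; (b) $\sup_{\Omega}\|\nabla f\|\le\gamma_{f,1}$, $\sup_\Omega\|\nabla^2 f\|\le\gamma_{f,2}$, $\sup_\Omega\|\nabla c_i\|\le\gamma_{c_i,1}$, $\sup_\Omega\|\nabla^2c_i\|\le\gamma_{c_i,2}$;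 (c) there is $\sigma_0>0$ with $\sigma_{\min}(\nabla\mathbf c(\mathbf x))\ge\sigma_0$ on $\Omega$. *)

theory Defs
  imports "HOL-Analysis.Analysis"
begin

definition specnorm :: "real^'n^'m \<Rightarrow> real" where
  "specnorm A = onorm (\<lambda>v. A *v v)"

definition sigma_min :: "real^'m^'n \<Rightarrow> real" where
  "sigma_min A = Inf {norm (A *v u) | u. norm u = 1}"

text \<open>Jacobian-type matrix whose columns are the constraint gradients.\<close>
definition cjac :: "('m \<Rightarrow> real^'n \<Rightarrow> real^'n) \<Rightarrow> real^'n \<Rightarrow> real^'m^'n" where
  "cjac gc x = (\<chi> j i. gc i x $ j)"

definition projP :: "('m::finite \<Rightarrow> real^'n \<Rightarrow> real^'n) \<Rightarrow> real^'n \<Rightarrow> real^'n^'n" where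
  "projP gc x = matrix (closest_point {v. transpose (cjac gc x) *v v = 0})"

definition lag_grad :: "(real^'n \<Rightarrow> real^'n) \<Rightarrow> ('m::finite \<Rightarrow> real^'n \<Rightarrow> real^'n)
    \<Rightarrow> real^'n \<Rightarrow> real^'m \<Rightarrow> real^'n" where
  "lag_grad gf gc x lam = gf x - (\<Sum>i\<in>UNIV. (lam $ i) *\<^sub>R gc i x)"

definition lag_hess :: "(real^'n \<Rightarrow> real^'n^'n) \<Rightarrow> ('m::finite \<Rightarrow> real^'n \<Rightarrow> real^'n^'n)
    \<Rightarrow> real^'n \<Rightarrow> real^'m \<Rightarrow> real^'n^'n" where
  "lag_hess Hf Hc x lam = Hf x - (\<Sum>i\<in>UNIV. (lam $ i) *\<^sub>R Hc i x)"

definition projH :: "(real^'n \<Rightarrow> real^'n^'n) \<Rightarrow> ('m::finite \<Rightarrow> real^'n \<Rightarrow> real^'n) \<Rightarrow> ('m \<Rightarrow> real^'n \<Rightarrow> real^'n^'n)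
    \<Rightarrow> (real^'n \<Rightarrow> real^'m) \<Rightarrow> real^'n \<Rightarrow> real^'n^'n" where
  "projH Hf gc Hc lam x =
     transpose (projP gc x) ** lag_hess Hf Hc x (lam x) ** projP gc x"

end

theory Submission
  imports Defs
begin

text \<open>The spectral norm of P^T (Hess L) P is at most the product of the norms of the factors. The
  projection P has entries bounded by 1, since it is 1-Lipschitz and fixes 0. The Hessian of the
  Lagrangian is bounded by gamma_f2 + sum_i |lam_i| gamma_c2_i, and the multiplier is bounded: being a
  least-squares solution it satisfies |J lam| <= 2 |grad f| for the constraint Jacobian J, and the
  lower bound sigma_0 on the smallest singular value of J turns this into |lam| <= 2 gamma_f1 / sigma_0.\<close>

lemma norm_matrix_vector_mult_le_specnorm:
  fixes A :: "real^'n^'m"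
  shows "norm (A *v v) \<le> specnorm A * norm v"
  unfolding specnorm_def by (rule onorm) (simp add: linear_linear)

lemma specnorm_nonneg: "0 \<le> specnorm (A :: real^'n^'m)"
  unfolding specnorm_def by (rule onorm_pos_le) (simp add: linear_linear)

lemma specnorm_le:
  fixes A :: "real^'n^'m"
  assumes "0 \<le> b" and "\<And>v. norm (A *v v) \<le> b * norm v"
  shows "specnorm A \<le> b"
  unfolding specnorm_def by (rule onorm_bound[OF assms])

lemma specnorm_le_entries:
  fixes A :: "real^'n^'m"
  assumes "\<And>i j. \<bar>A $ i $ j\<bar> \<le> b"
  shows "specnorm A \<le> real CARD('m) * real CARD('n) * b"
  unfolding specnorm_def by (rule onorm_le_matrix_component[OF assms])

lemma specnorm_matrix_mult_le:
  fixes A :: "real^'k^'m" and B :: "real^'n^'k"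
  shows "specnorm (A ** B) \<le> specnorm A * specnorm B"
proof (rule specnorm_le)
  show "0 \<le> specnorm A * specnorm B" by (simp add: specnorm_nonneg)
next
  fix v
  have "norm ((A ** B) *v v) \<le> specnorm A * norm (B *v v)"
    unfolding matrix_vector_mul_assoc[symmetric] by (rule norm_matrix_vector_mult_le_specnorm)
  also have "\<dots> \<le> specnorm A * (specnorm B * norm v)"
    by (intro mult_left_mono norm_matrix_vector_mult_le_specnorm specnorm_nonneg)
  finally show "norm ((A ** B) *v v) \<le> specnorm A * specnorm B * norm v"
    by (simp add: mult.assoc)
qed

lemma sigma_min_le:
  fixes A :: "real^'m^'n"
  assumes "norm u = 1"
  shows "sigma_min A \<le> norm (A *v u)"
  unfolding sigma_min_def
  by (rule cInf_lower) (use assms in \<open>auto intro: bdd_belowI[where m=0]\<close>)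

lemma sigma_min_mult_le:
  fixes A :: "real^'m^'n"
  shows "sigma_min A * norm u \<le> norm (A *v u)"
proof (cases "u = 0")
  case False
  then have "sigma_min A \<le> norm (A *v (u /\<^sub>R norm u))"
    by (intro sigma_min_le) simp
  also have "\<dots> = norm (A *v u) / norm u"
    by (simp add: matrix_vector_mult_scaleR divide_inverse_commute)
  finally show ?thesis
    using False by (simp add: pos_le_divide_eq)
qed simp

lemma norm_le_of_sigma_min_residual_le:
  fixes J :: "real^'m^'n"
  assumes "0 < \<sigma>" and "\<sigma> \<le> sigma_min J" and "norm (g - J *v \<mu>) \<le> norm g"
  shows "norm \<mu> \<le> 2 * norm g / \<sigma>"
proof -
  have "\<sigma> * norm \<mu> \<le> sigma_min J * norm \<mu>"
    using assms(2) by (simp add: mult_right_mono)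
  also have "\<dots> \<le> norm (J *v \<mu>)" by (rule sigma_min_mult_le)
  also have "\<dots> \<le> norm g + norm (g - J *v \<mu>)"
    using norm_triangle_sub[of "J *v \<mu>" g] by (simp add: norm_minus_commute)
  also have "\<dots> \<le> 2 * norm g" using assms(3) by simp
  finally show ?thesis
    using assms(1) by (simp add: pos_le_divide_eq mult.commute)
qed

lemma lag_grad_eq_cjac: "lag_grad gf gc x \<mu> = gf x - cjac gc x *v \<mu>"
  by (simp add: lag_grad_def vec_eq_iff matrix_vector_mult_def cjac_def mult.commute sum_component)

lemma lag_hess_mult_eq:
  "lag_hess Hf Hc x \<mu> *v v = Hf x *v v - (\<Sum>i\<in>UNIV. \<mu> $ i *\<^sub>R (Hc i x *v v))"
  unfolding lag_hess_def matrix_vector_mult_diff_rdistrib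
  by (simp add: vec_eq_iff matrix_vector_mult_def sum_distrib_left)
    (subst sum.swap, simp add: sum_distrib_right mult.assoc)

lemma specnorm_lag_hess_le:
  "specnorm (lag_hess Hf Hc x \<mu>) \<le> specnorm (Hf x) + (\<Sum>i\<in>UNIV. \<bar>\<mu> $ i\<bar> * specnorm (Hc i x))"
proof (rule specnorm_le)
  show "0 \<le> specnorm (Hf x) + (\<Sum>i\<in>UNIV. \<bar>\<mu> $ i\<bar> * specnorm (Hc i x))"
    by (intro add_nonneg_nonneg sum_nonneg mult_nonneg_nonneg specnorm_nonneg abs_ge_zero)
next
  fix v
  have "norm (lag_hess Hf Hc x \<mu> *v v)
      \<le> norm (Hf x *v v) + (\<Sum>i\<in>UNIV. \<bar>\<mu> $ i\<bar> * norm (Hc i x *v v))"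
    unfolding lag_hess_mult_eq
    by (rule order_trans[OF norm_triangle_ineq4]) (simp add: order_trans[OF norm_sum])
  also have "\<dots> \<le> specnorm (Hf x) * norm v + (\<Sum>i\<in>UNIV. \<bar>\<mu> $ i\<bar> * (specnorm (Hc i x) * norm v))"
    by (intro add_mono sum_mono mult_left_mono norm_matrix_vector_mult_le_specnorm abs_ge_zero)
  finally show "norm (lag_hess Hf Hc x \<mu> *v v)
      \<le> (specnorm (Hf x) + (\<Sum>i\<in>UNIV. \<bar>\<mu> $ i\<bar> * specnorm (Hc i x))) * norm v"
    by (simp add: algebra_simps sum_distrib_left)
qed

lemma abs_projP_entry_le: "\<bar>projP gc x $ i $ j\<bar> \<le> 1"
proof -
  define S where "S = {v. transpose (cjac gc x) *v v = 0}"
  have "subspace S"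
    unfolding S_def by (auto simp: subspace_def vector_matrix_left_distrib scaleR_vector_matrix_assoc)
  moreover have "closed S"
    unfolding S_def by (intro closed_Collect_eq continuous_intros)
  ultimately have "dist (closest_point S (axis j 1)) (closest_point S 0) \<le> dist (axis j 1) (0 :: real^_)"
    by (intro closest_point_lipschitz subspace_imp_convex) (auto intro: subspace_0)
  moreover have "closest_point S 0 = 0"
    using \<open>subspace S\<close> by (simp add: closest_point_self subspace_0)
  ultimately have "norm (closest_point S (axis j 1)) \<le> 1"
    by simp
  then show ?thesis
    unfolding projP_def S_def[symmetric] matrix_def
    using component_le_norm_cart order_trans by fastforce
qed

lemma specnorm_projH_le:
  fixes gc :: "'m::finite \<Rightarrow> real^'n \<Rightarrow> real^'n"
  shows "specnorm (projH Hf gc Hc lam x) \<le> real CARD('n) ^ 4 * specnorm (lag_hess Hf Hc x (lam x))"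
proof -
  let ?P = "projP gc x" and ?H = "lag_hess Hf Hc x (lam x)" and ?N = "real CARD('n)"
  have P: "specnorm ?P \<le> ?N * ?N" and PT: "specnorm (transpose ?P) \<le> ?N * ?N"
    using specnorm_le_entries[of ?P 1] specnorm_le_entries[of "transpose ?P" 1]
    by (simp_all add: abs_projP_entry_le transpose_def)
  have "specnorm (projH Hf gc Hc lam x) \<le> specnorm (transpose ?P) * specnorm ?H * specnorm ?P"
    unfolding projH_def
    by (rule order_trans[OF specnorm_matrix_mult_le])
      (intro mult_right_mono specnorm_matrix_mult_le specnorm_nonneg)
  also have "\<dots> \<le> (?N * ?N) * specnorm ?H * (?N * ?N)"
    by (intro mult_mono P PT specnorm_nonneg mult_nonneg_nonneg) simp_all
  finally show ?thesis
    by (simp add: power4_eq_xxxx algebra_simps)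
qed

theorem lemma3:
  fixes f :: "real^'n \<Rightarrow> real" and gf :: "real^'n \<Rightarrow> real^'n" and Hf :: "real^'n \<Rightarrow> real^'n^'n"
    and c :: "'m::finite \<Rightarrow> real^'n \<Rightarrow> real" and gc :: "'m \<Rightarrow> real^'n \<Rightarrow> real^'n"
    and Hc :: "'m \<Rightarrow> real^'n \<Rightarrow> real^'n^'n"
    and \<Omega> :: "(real^'n) set"
    and lam :: "real^'n \<Rightarrow> real^'m"
    and \<gamma>f1 \<gamma>f2 \<sigma>0 :: real and \<gamma>c1 \<gamma>c2 :: "'m \<Rightarrow> real"
  assumes f_d1: "\<And>x. (f has_derivative (\<lambda>h. gf x \<bullet> h)) (at x)"
    and f_d2: "\<And>x. (gf has_derivative (\<lambda>h. Hf x *v h)) (at x)"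
    and f_C2: "continuous_on UNIV Hf"
    and c_d1: "\<And>i x. (c i has_derivative (\<lambda>h. gc i x \<bullet> h)) (at x)"
    and c_d2: "\<And>i x. (gc i has_derivative (\<lambda>h. Hc i x *v h)) (at x)"
    and c_C2: "\<And>i. continuous_on UNIV (Hc i)"
    and Omega: "\<Omega> = {x. \<forall>i. c i x = 0}"
    and lam_min: "\<And>x \<mu>. x \<in> \<Omega> \<Longrightarrow> norm (lag_grad gf gc x (lam x)) \<le> norm (lag_grad gf gc x \<mu>)"
    and lip_gf: "\<exists>L. \<forall>x\<in>\<Omega>. \<forall>y\<in>\<Omega>. norm (gf x - gf y) \<le> L * norm (x - y)"
    and lip_Hf: "\<exists>L. \<forall>x\<in>\<Omega>. \<forall>y\<in>\<Omega>. specnorm (Hf x - Hf y) \<le> L * norm (x - y)"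
    and lip_gc: "\<And>i. \<exists>L. \<forall>x\<in>\<Omega>. \<forall>y\<in>\<Omega>. norm (gc i x - gc i y) \<le> L * norm (x - y)"
    and lip_Hc: "\<And>i. \<exists>L. \<forall>x\<in>\<Omega>. \<forall>y\<in>\<Omega>. specnorm (Hc i x - Hc i y) \<le> L * norm (x - y)"
    and bd_gf: "\<And>x. x \<in> \<Omega> \<Longrightarrow> norm (gf x) \<le> \<gamma>f1"
    and bd_Hf: "\<And>x. x \<in> \<Omega> \<Longrightarrow> specnorm (Hf x) \<le> \<gamma>f2"
    and bd_gc: "\<And>i x. x \<in> \<Omega> \<Longrightarrow> norm (gc i x) \<le> \<gamma>c1 i"
    and bd_Hc: "\<And>i x. x \<in> \<Omega> \<Longrightarrow> specnorm (Hc i x) \<le> \<gamma>c2 i"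
    and sig_pos: "\<sigma>0 > 0"
    and sig: "\<And>x. x \<in> \<Omega> \<Longrightarrow> sigma_min (cjac gc x) \<ge> \<sigma>0"
  shows "\<exists>\<gamma>h\<ge>0. \<forall>x\<in>\<Omega>. specnorm (projH Hf gc Hc lam x) \<le> \<gamma>h"
proof -
  define \<Lambda> where "\<Lambda> = 2 * \<gamma>f1 / \<sigma>0"
  define \<gamma>h where "\<gamma>h = real CARD('n) ^ 4 * (\<gamma>f2 + (\<Sum>i\<in>UNIV. \<Lambda> * \<gamma>c2 i))"
  have bound: "specnorm (projH Hf gc Hc lam x) \<le> \<gamma>h" if x: "x \<in> \<Omega>" for x
  proof -
    have "norm (lam x) \<le> \<Lambda>"
      unfolding \<Lambda>_def using lam_min[OF x, of 0] bd_gf[OF x] sig_pos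
      by (intro order_trans[OF norm_le_of_sigma_min_residual_le[OF sig_pos sig[OF x]]])
        (auto simp: lag_grad_eq_cjac intro!: divide_right_mono)
    then have "\<bar>lam x $ i\<bar> * specnorm (Hc i x) \<le> \<Lambda> * \<gamma>c2 i" for i
      using bd_Hc[OF x, of i] component_le_norm_cart[of "lam x" i]
      by (intro mult_mono) (simp_all add: specnorm_nonneg)
    then have "specnorm (lag_hess Hf Hc x (lam x)) \<le> \<gamma>f2 + (\<Sum>i\<in>UNIV. \<Lambda> * \<gamma>c2 i)"
      using bd_Hf[OF x] by (intro order_trans[OF specnorm_lag_hess_le] add_mono sum_mono)
    then show ?thesis
      unfolding \<gamma>h_def by (intro order_trans[OF specnorm_projH_le] mult_left_mono) simp_all
  qed
  \<comment> \<open>\<open>\<gamma>h\<close> may be negative when \<open>\<Omega>\<close> is empty\<close>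
  show ?thesis
    using bound by (intro exI[of _ "max 0 \<gamma>h"]) (auto intro: le_max_iff_disj[THEN iffD2])
qed

end
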